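(* Let $n\ge 4$, $\lambda=\frac{n-1}{2(n-2)}$, and consider $V_2\mathbb R^n=\mathrm{SO}(n)/\mathrm{SO}(n-2)$ with the decomposition $\mathfrak m=\mathfrak m_{12}\oplus\mathfrak m_{13}\oplus\mathfrak m_{23}$, $\mathfrak m_{12}=\mathbb R\xi_{12}$, $\mathfrak m_{13}=\mathrm{span}\{\xi_{1k}:3\le k\le n\}$, $\mathfrak m_{23}=\mathrm{span}\{\xi_{2k}:3\le k\le n\}$, and the (Einstein) metric $\Lambda=\mathrm{Id}_{\mathfrak m_{12}}+\lambda\,\mathrm{Id}_{\mathfrak m_{13}}+\lambda\,\mathrm{Id}_{\mathfrak m_{23}}$. A nonzero vector $X=a_{12}\xi_{12}+\sum_{k=3}^n(a_{1k}\xi_{1k}+a_{2k}\xi_{2k})$ satisfies $[X,\Lambda X]_{\mathfrak m}=0$ (i.e. $t\mapsto\exp(tX)\cdot o$ is a geodesic of this metric) if and only if either $a_{12}=0$ (i.e. $X\in\mathfrak m_{13}\oplus\mathfrak m_{23}$) or $X\in\mathbb R\xi_{12}$.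
   Context: $E_{ab}$ is the $n\times n$ matrix with $1$ in entry $(a,b)$ and $0$ elsewhere; $\xi_{ab}=E_{ab}-E_{ba}$; $\mathrm{SO}(n-2)$ acts on the last $n-2$ coordinates. $\mathfrak m$ is the orthogonal complement of $\mathfrak{so}(n-2)$ in $\mathfrak{so}(n)$ with respect to the negative of the Killing form $B$; the metric is $\langle X,Y\rangle=B(\Lambda X,Y)$; $[\cdot,\cdot]_{\mathfrak m}$ is the $\mathfrak m$-component of the bracket. *)

theory Defs
  imports "HOL-Analysis.Analysis"
begin

text \<open>n x n real matrices are modelled as functions nat => nat => real, indices 1..n
  (entries outside 1..n are zero for all matrices built below).\<close>

definition E :: "nat \<Rightarrow> nat \<Rightarrow> nat \<Rightarrow> nat \<Rightarrow> real" where
  "E a b = (\<lambda>i j. if i = a \<and> j = b then 1 else 0)"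

definition xi :: "nat \<Rightarrow> nat \<Rightarrow> nat \<Rightarrow> nat \<Rightarrow> real" where
  "xi a b = (\<lambda>i j. E a b i j - E b a i j)"

definition mmul :: "nat \<Rightarrow> (nat \<Rightarrow> nat \<Rightarrow> real) \<Rightarrow> (nat \<Rightarrow> nat \<Rightarrow> real) \<Rightarrow> nat \<Rightarrow> nat \<Rightarrow> real" where
  "mmul n A B = (\<lambda>i j. \<Sum>k=1..n. A i k * B k j)"

definition lie_bracket :: "nat \<Rightarrow> (nat \<Rightarrow> nat \<Rightarrow> real) \<Rightarrow> (nat \<Rightarrow> nat \<Rightarrow> real) \<Rightarrow> nat \<Rightarrow> nat \<Rightarrow> real" where
  "lie_bracket n A B = (\<lambda>i j. mmul n A B i j - mmul n B A i j)"

text \<open>The m-component of an element of so(n): so(n-2) is the lower-right block on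
  coordinates 3..n; its orthogonal complement m w.r.t. the (negative) Killing form
  consists of the skew matrices whose lower-right block vanishes, so the m-component
  is obtained by zeroing that block.\<close>
definition m_comp :: "(nat \<Rightarrow> nat \<Rightarrow> real) \<Rightarrow> nat \<Rightarrow> nat \<Rightarrow> real" where
  "m_comp Z = (\<lambda>i j. if 3 \<le> i \<and> 3 \<le> j then 0 else Z i j)"

definition vecX :: "nat \<Rightarrow> real \<Rightarrow> (nat \<Rightarrow> real) \<Rightarrow> (nat \<Rightarrow> real) \<Rightarrow> nat \<Rightarrow> nat \<Rightarrow> real" where
  "vecX n a12 a1 a2 = (\<lambda>i j. a12 * xi 1 2 i j
      + (\<Sum>k=3..n. a1 k * xi 1 k i j + a2 k * xi 2 k i j))"

definition LambdaOp :: "real \<Rightarrow> (nat \<Rightarrow> nat \<Rightarrow> real) \<Rightarrow> nat \<Rightarrow> nat \<Rightarrow> real" where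
  "LambdaOp lam Z = (\<lambda>i j. if (i = 1 \<and> j = 2) \<or> (i = 2 \<and> j = 1) then Z i j else lam * Z i j)"

end

theory Submission
  imports Defs
begin

text \<open>Only the entries (1,k) and (2,k), k \<ge> 3, of the m-component of [X, \<Lambda>X] can be
  nonzero; they equal (\<lambda> - 1) a12 a2k and (1 - \<lambda>) a12 a1k. Since \<lambda> \<noteq> 1 for n \<ge> 4,
  the bracket vanishes iff a12 = 0 or all a1k, a2k vanish.\<close>

lemma sum_row_delta:
  "(\<Sum>k=3..(n::nat). f k * (if i = a \<and> j = k then 1 else 0)) =
     (if i = a \<and> 3 \<le> j \<and> j \<le> n then f j else (0::real))"
  by (cases "i = a") (auto simp: sum.delta sum.delta' if_distrib cong: if_cong)

lemma sum_column_delta: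
  "(\<Sum>k=3..(n::nat). f k * (if i = k \<and> j = a then 1 else 0)) =
     (if j = a \<and> 3 \<le> i \<and> i \<le> n then f i else (0::real))"
  by (cases "j = a") (auto simp: sum.delta sum.delta' if_distrib cong: if_cong)

lemma vecX_entries:
  "vecX n a12 a1 a2 i j =
    (if i = 1 \<and> j = 2 then a12 else if i = 2 \<and> j = 1 then - a12
     else if i = 1 \<and> 3 \<le> j \<and> j \<le> n then a1 j else if i = 2 \<and> 3 \<le> j \<and> j \<le> n then a2 j
     else if j = 1 \<and> 3 \<le> i \<and> i \<le> n then - a1 i else if j = 2 \<and> 3 \<le> i \<and> i \<le> n then - a2 i
     else 0)"
  unfolding vecX_def xi_def E_def
  by (simp add: sum.distrib sum_subtractf right_diff_distrib sum_row_delta sum_column_delta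
      del: mult_if_delta)

lemma vecX_eq_xi12_iff:
  "vecX n a12 a1 a2 = (\<lambda>i j. a12 * xi 1 2 i j) \<longleftrightarrow> (\<forall>k\<in>{3..n}. a1 k = 0 \<and> a2 k = 0)"
proof (rule iffI, intro ballI)
  fix k :: nat
  assume X_eq: "vecX n a12 a1 a2 = (\<lambda>i j. a12 * xi 1 2 i j)" and k: "k \<in> {3..n}"
  have "vecX n a12 a1 a2 1 k = a12 * xi 1 2 1 k" "vecX n a12 a1 a2 2 k = a12 * xi 1 2 2 k"
    using X_eq by simp_all
  with k show "a1 k = 0 \<and> a2 k = 0"
    by (simp add: vecX_entries xi_def E_def)
qed (intro ext, auto simp: vecX_entries xi_def E_def)

lemma sum_split_first_two:
  "2 \<le> (n::nat) \<Longrightarrow> (\<Sum>k=1..n. f k) = f 1 + f 2 + (\<Sum>k=3..n. f k :: real)"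
  by (simp add: sum.atLeast_Suc_atMost numeral_eq_Suc)

lemma lie_bracket_scaled_self: "lie_bracket n A (\<lambda>i j. c * A i j) = (\<lambda>i j. 0)"
  by (simp add: lie_bracket_def mmul_def sum_distrib_left algebra_simps)

lemma LambdaOp_eq_scaled:
  "Z 1 2 = 0 \<Longrightarrow> Z 2 1 = 0 \<Longrightarrow> LambdaOp lam Z = (\<lambda>i j. lam * Z i j)"
  by (intro ext) (auto simp: LambdaOp_def)

lemma LambdaOp_xi12: "LambdaOp lam (\<lambda>i j. c * xi 1 2 i j) = (\<lambda>i j. c * xi 1 2 i j)"
  by (intro ext) (auto simp: LambdaOp_def xi_def E_def)

lemma lie_bracket_vecX_LambdaOp_row1:
  assumes "2 \<le> n" "3 \<le> k" "k \<le> n"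
  shows "lie_bracket n (vecX n a12 a1 a2) (LambdaOp lam (vecX n a12 a1 a2)) 1 k
           = (lam - 1) * a12 * a2 k"
proof -
  let ?X = "vecX n a12 a1 a2"
  have "mmul n ?X (LambdaOp lam ?X) 1 k = lam * a12 * a2 k"
       "mmul n (LambdaOp lam ?X) ?X 1 k = a12 * a2 k"
    unfolding mmul_def sum_split_first_two[OF assms(1)] using assms
    by (simp_all add: vecX_entries LambdaOp_def sum.neutral)
  then show ?thesis
    by (simp add: lie_bracket_def algebra_simps)
qed

lemma lie_bracket_vecX_LambdaOp_row2:
  assumes "2 \<le> n" "3 \<le> k" "k \<le> n"
  shows "lie_bracket n (vecX n a12 a1 a2) (LambdaOp lam (vecX n a12 a1 a2)) 2 k
           = (1 - lam) * a12 * a1 k"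
proof -
  let ?X = "vecX n a12 a1 a2"
  have "mmul n ?X (LambdaOp lam ?X) 2 k = - lam * a12 * a1 k"
       "mmul n (LambdaOp lam ?X) ?X 2 k = - a12 * a1 k"
    unfolding mmul_def sum_split_first_two[OF assms(1)] using assms
    by (simp_all add: vecX_entries LambdaOp_def sum.neutral)
  then show ?thesis
    by (simp add: lie_bracket_def algebra_simps)
qed

lemma geodesic_vector_iff:
  assumes "2 \<le> n" "lam \<noteq> 1"
  shows "m_comp (lie_bracket n (vecX n a12 a1 a2) (LambdaOp lam (vecX n a12 a1 a2))) = (\<lambda>i j. 0)
         \<longleftrightarrow> (a12 = 0 \<or> (\<exists>c. vecX n a12 a1 a2 = (\<lambda>i j. c * xi 1 2 i j)))"
    (is "?bracket = (\<lambda>i j. 0) \<longleftrightarrow> _")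
proof
  assume vanish: "?bracket = (\<lambda>i j. 0)"
  have "a1 k = 0 \<and> a2 k = 0" if "a12 \<noteq> 0" "k \<in> {3..n}" for k
  proof -
    have "?bracket 1 k = 0" "?bracket 2 k = 0"
      using vanish by simp_all
    then have "(lam - 1) * a12 * a2 k = 0" "(1 - lam) * a12 * a1 k = 0"
      using that lie_bracket_vecX_LambdaOp_row1[OF assms(1)] lie_bracket_vecX_LambdaOp_row2[OF assms(1)]
      by (simp_all add: m_comp_def)
    then show ?thesis
      using that assms(2) by simp
  qed
  then show "a12 = 0 \<or> (\<exists>c. vecX n a12 a1 a2 = (\<lambda>i j. c * xi 1 2 i j))"
    using vecX_eq_xi12_iff by blast
next
  assume "a12 = 0 \<or> (\<exists>c. vecX n a12 a1 a2 = (\<lambda>i j. c * xi 1 2 i j))"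
  then consider "a12 = 0" | c where "vecX n a12 a1 a2 = (\<lambda>i j. c * xi 1 2 i j)"
    by blast
  then show "?bracket = (\<lambda>i j. 0)"
  proof cases
    case 1
    then have "LambdaOp lam (vecX n a12 a1 a2) = (\<lambda>i j. lam * vecX n a12 a1 a2 i j)"
      by (intro LambdaOp_eq_scaled) (simp_all add: vecX_entries)
    then show ?thesis
      by (simp add: lie_bracket_scaled_self m_comp_def)
  next
    case 2
    then have "LambdaOp lam (vecX n a12 a1 a2) = (\<lambda>i j. 1 * vecX n a12 a1 a2 i j)"
      by (metis LambdaOp_xi12 mult_1)
    then show ?thesis
      by (simp only: lie_bracket_scaled_self) (simp add: m_comp_def)
  qed
qed

lemma Einstein_constant_ne_1: "4 \<le> n \<Longrightarrow> (real n - 1) / (2 * (real n - 2)) \<noteq> 1"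
  by (simp add: field_simps)

text \<open>The characterization does not need X \<noteq> 0.\<close>

theorem mainTheorem4:
  fixes n :: nat and a12 :: real and a1 a2 :: "nat \<Rightarrow> real"
  assumes "n \<ge> 4"
    and "vecX n a12 a1 a2 \<noteq> (\<lambda>i j. 0)"
  shows "m_comp (lie_bracket n (vecX n a12 a1 a2)
            (LambdaOp ((real n - 1) / (2 * (real n - 2))) (vecX n a12 a1 a2))) = (\<lambda>i j. 0)
         \<longleftrightarrow> (a12 = 0 \<or> (\<exists>c::real. vecX n a12 a1 a2 = (\<lambda>i j. c * xi 1 2 i j)))"
  using assms(1) by (intro geodesic_vector_iff Einstein_constant_ne_1) simp_all

end
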